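(* Let $c\in\mathbb Z_{>0}$ and put $\nu_c=1$ if $c\ge2$, $\nu_c=2$ if $c=1$. Let $\alpha_1,\ldots,\alpha_m$ be words all of whose letters have integer first component, let $q\in\mathbb Z$, $z\in\mathbb C$, and $e_1,\ldots,e_m\in\mathbb Z_{\ge0}$. Then for every positive integer $k$, \[ \sum_{n=1}^{k}z^n(cn)^q\prod_{j=1}^{m}\mathcal H_{\alpha_j}(cn+1)^{e_j}\in\mathscr H_{ck}+\mathscr H_{ck+1}, \] and \[ \sum_{n=\nu_c}^{k}z^n(cn-1)^q\prod_{j=1}^{m}\mathcal H_{\alpha_j}(cn)^{e_j}\in\mathscr H_{ck-1}+\mathscr H_{ck}. \]
   Context: A letter is a pair $(r,s)\in\mathbb C^2$ and a word is a finite sequence of letters. For a word $\alpha=((r_1,s_1),\ldots,(r_d,s_d))$ and a positive integer $N$, \[ \mathcal H_{\alpha}(N)=\sum_{N\ge n_1>\cdots>n_d\ge1}\prod_{i=1}^{d}\frac{s_i^{n_i}}{n_i^{r_i}},\qquad \mathcal H_\emptyset(N)=1. \] For a positive integer $N$, $\mathscr H_N=\operatorname{span}_{\mathbb C}\{\mathcal H_\beta(N):\beta\text{ a word}\}$. *)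

theory Defs
  imports "HOL-Analysis.Analysis"
begin

type_synonym letter = "complex \<times> complex"
type_synonym word = "letter list"

definition idx_tuples :: "nat \<Rightarrow> nat \<Rightarrow> nat list set" where
  "idx_tuples N d = {ns. length ns = d \<and> sorted_wrt (>) ns \<and> (\<forall>n\<in>set ns. 1 \<le> n \<and> n \<le> N)}"

definition Hw :: "word \<Rightarrow> nat \<Rightarrow> complex" where
  "Hw \<alpha> N = (\<Sum>ns\<in>idx_tuples N (length \<alpha>).
      \<Prod>i<length \<alpha>. (snd (\<alpha>!i)) ^ (ns!i) / (of_nat (ns!i)) powr (fst (\<alpha>!i)))"

text \<open>F k lies in (span H_{N1 k}) + (span H_{N2 k}) uniformly in k >= 1: one fixed finite
  linear combination of words (coefficients independent of k) works for all k >= 1.\<close>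
definition in_HH_sum :: "(nat \<Rightarrow> complex) \<Rightarrow> (nat \<Rightarrow> nat) \<Rightarrow> (nat \<Rightarrow> nat) \<Rightarrow> bool" where
  "in_HH_sum F N1 N2 \<longleftrightarrow>
     (\<exists>P Q :: (complex \<times> word) list. \<forall>k\<ge>1.
        F k = (\<Sum>(a,\<beta>)\<leftarrow>P. a * Hw \<beta> (N1 k)) + (\<Sum>(a,\<beta>)\<leftarrow>Q. a * Hw \<beta> (N2 k)))"

definition nu :: "nat \<Rightarrow> nat" where
  "nu c = (if c \<ge> 2 then 1 else 2)"

end

(*
  Let C be the complex span of the functions N -> H_beta(N) for words beta with integer
  exponents. The recursion H_((r,s) # beta)(N) = sum_(1 <= M <= N) s^M M^(-r) H_beta(M - 1)
  makes C closed under nested summation, and the discrete product rule (the stuffle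
  relation) makes it closed under products; so the product P of the powers of the
  H_(alpha_j) lies in C. Writing z = w^c, both sums become sums of w^M M^q P(M + 1) over the
  M <= ck with c | M (resp. M <= ck - 1 with c | M + 1). A roots-of-unity filter removes
  the divisibility condition. Finally H_beta(M + 1) = H_beta(M) + s^(M+1) (M+1)^(-r) H_beta'(M)
  and the partial fraction decomposition of M^q (M + 1)^(-r) reduce everything to nested
  sums, except that the terms carrying powers of M + 1 become nested sums evaluated at
  N + 1: this is where the second level ck + 1 (resp. ck) comes from.
*)

theory Submission
  imports Defs
begin

section \<open>Recursion for multiple harmonic sums\<close>

lemma idx_tuples_0 [simp]: "idx_tuples N 0 = {[]}"
  by (auto simp: idx_tuples_def)

lemma finite_idx_tuples: "finite (idx_tuples N d)"
proof (rule finite_subset)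
  show "idx_tuples N d \<subseteq> {xs. set xs \<subseteq> {1..N} \<and> length xs = d}"
    by (auto simp: idx_tuples_def)
qed (simp add: finite_lists_length_eq)

lemma idx_tuples_Suc:
  "idx_tuples N (Suc d) = (\<Union>M\<in>{1..N}. (#) M ` idx_tuples (M - 1) d)"
  by (fastforce simp: idx_tuples_def length_Suc_conv)

lemma Hw_Nil [simp]: "Hw [] N = 1"
  by (simp add: Hw_def)

lemma Hw_Cons: "Hw ((r, s) # \<beta>) N = (\<Sum>M=1..N. s ^ M / of_nat M powr r * Hw \<beta> (M - 1))"
proof -
  define f where "f ns = (\<Prod>i<Suc (length \<beta>).
    snd (((r, s) # \<beta>) ! i) ^ (ns ! i) / of_nat (ns ! i) powr fst (((r, s) # \<beta>) ! i))" for ns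
  have "Hw ((r, s) # \<beta>) N = sum f (\<Union>M\<in>{1..N}. (#) M ` idx_tuples (M - 1) (length \<beta>))"
    by (simp add: Hw_def f_def idx_tuples_Suc)
  also have "\<dots> = (\<Sum>M=1..N. sum f ((#) M ` idx_tuples (M - 1) (length \<beta>)))"
    by (rule sum.UNION_disjoint) (auto simp: finite_idx_tuples)
  also have "\<dots> = (\<Sum>M=1..N. sum (f \<circ> (#) M) (idx_tuples (M - 1) (length \<beta>)))"
    by (intro sum.cong refl sum.reindex) simp
  also have "\<dots> = (\<Sum>M=1..N. s ^ M / of_nat M powr r * Hw \<beta> (M - 1))"
    by (intro sum.cong refl)
      (simp add: f_def Hw_def prod.lessThan_Suc_shift sum_distrib_left del: prod.lessThan_Suc)
  finally show ?thesis .
qed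

lemma Hw_Cons_of_int:
  "Hw ((of_int r, s) # \<beta>) N = (\<Sum>M=1..N. s ^ M * of_nat M powi (- r) * Hw \<beta> (M - 1))"
  unfolding Hw_Cons
  by (intro sum.cong refl) (auto simp: complex_powr_of_int power_int_minus divide_inverse)

lemma Hw_Cons_of_int_step:
  "0 < M \<Longrightarrow> Hw ((of_int r, s) # \<beta>) M
     = Hw ((of_int r, s) # \<beta>) (M - 1) + s ^ M * of_nat M powi (- r) * Hw \<beta> (M - 1)"
  by (cases M) (simp_all add: Hw_Cons_of_int)

section \<open>The span of harmonic sums with integer exponents\<close>

definition integral_word :: "word \<Rightarrow> bool" where
  "integral_word \<beta> \<longleftrightarrow> (\<forall>l\<in>set \<beta>. fst l \<in> \<int>)"

lemma integral_word_Nil [simp]: "integral_word []"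
  by (simp add: integral_word_def)

lemma integral_word_Cons [simp]: "integral_word ((r, s) # \<beta>) \<longleftrightarrow> r \<in> \<int> \<and> integral_word \<beta>"
  by (simp add: integral_word_def)

lemma integral_word_ConsE:
  assumes "integral_word (l # \<beta>)"
  obtains r s where "l = (of_int r, s)" and "integral_word \<beta>"
  using assms by (cases l) (auto simp: integral_word_def elim!: Ints_cases)

inductive harmonic_span :: "(nat \<Rightarrow> complex) \<Rightarrow> bool" where
  word: "integral_word \<beta> \<Longrightarrow> harmonic_span (Hw \<beta>)"
| add: "harmonic_span f \<Longrightarrow> harmonic_span g \<Longrightarrow> harmonic_span (\<lambda>N. f N + g N)"
| scale: "harmonic_span f \<Longrightarrow> harmonic_span (\<lambda>N. a * f N)"

lemma harmonic_span_const: "harmonic_span (\<lambda>N. a)"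
  using harmonic_span.scale[OF harmonic_span.word[OF integral_word_Nil], of a] by simp

lemma harmonic_span_sum:
  "finite A \<Longrightarrow> (\<And>j. j \<in> A \<Longrightarrow> harmonic_span (f j)) \<Longrightarrow> harmonic_span (\<lambda>N. \<Sum>j\<in>A. f j N)"
  by (induction A rule: finite_induct) (simp_all add: harmonic_span_const harmonic_span.add)

lemma harmonic_span_weighted_sum_induct:
  assumes "harmonic_span G"
    and P_add: "\<And>f g. P f \<Longrightarrow> P g \<Longrightarrow> P (\<lambda>N. f N + g N)"
    and P_scale: "\<And>a f. P f \<Longrightarrow> P (\<lambda>N. a * f N)"
    and P_word: "\<And>\<beta>. integral_word \<beta> \<Longrightarrow> P (\<lambda>N. \<Sum>M=1..N. K M * Hw \<beta> (h M))"
  shows "P (\<lambda>N. \<Sum>M=1..N. K M * G (h M))"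
  using assms(1)
proof (induction G rule: harmonic_span.induct)
  case (word \<beta>)
  then show ?case by (rule P_word)
next
  case (add f g)
  then show ?case
    using P_add[OF add.IH] by (simp add: distrib_left sum.distrib)
next
  case (scale f a)
  then show ?case
    using P_scale[OF scale.IH, of a] by (simp add: sum_distrib_left mult.left_commute)
qed

lemma harmonic_span_nested_sum:
  assumes "harmonic_span G"
  shows "harmonic_span (\<lambda>N. \<Sum>M=1..N. s ^ M * of_nat M powi a * G (M - 1))"
  using assms
proof (rule harmonic_span_weighted_sum_induct[where K = "\<lambda>M. s ^ M * of_nat M powi a" and h = "\<lambda>M. M - 1"])
  fix \<beta> assume "integral_word \<beta>"
  then have "harmonic_span (Hw ((of_int (- a), s) # \<beta>))"
    by (intro harmonic_span.word) simp
  moreover have "Hw ((of_int (- a), s) # \<beta>) = (\<lambda>N. \<Sum>M=1..N. s ^ M * of_nat M powi a * Hw \<beta> (M - 1))"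
    by (rule ext) (simp only: Hw_Cons_of_int minus_minus)
  ultimately show "harmonic_span (\<lambda>N. \<Sum>M=1..N. s ^ M * of_nat M powi a * Hw \<beta> (M - 1))"
    by simp
qed (fact harmonic_span.add harmonic_span.scale)+

lemma harmonic_span_of_increments:
  assumes "harmonic_span (\<lambda>N. \<Sum>M=1..N. f M - f (M - 1))"
  shows "harmonic_span f"
proof -
  have "harmonic_span (\<lambda>N. f 0 + (\<Sum>M=1..N. f M - f (M - 1)))"
    by (rule harmonic_span.add[OF harmonic_span_const assms])
  moreover have "f 0 + (\<Sum>M=1..N. f M - f (M - 1)) = f N" for N
    using sum_telescope''[of 0 N f] by simp
  ultimately show ?thesis by simp
qed

lemma harmonic_span_mult_Hw:
  assumes "integral_word \<alpha>" and "integral_word \<beta>"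
  shows "harmonic_span (\<lambda>N. Hw \<alpha> N * Hw \<beta> N)"
  using assms
proof (induction \<alpha> arbitrary: \<beta>)
  case Nil
  then show ?case by (simp add: harmonic_span.word)
next
  case (Cons l \<alpha>')
  note IH_\<alpha> = Cons.IH
  obtain r s where l: "l = (of_int r, s)" and \<alpha>': "integral_word \<alpha>'"
    using Cons.prems(1) by (rule integral_word_ConsE)
  from Cons.prems(2) show ?case
  proof (induction \<beta>)
    case Nil
    then show ?case using Cons.prems(1) by (simp add: harmonic_span.word)
  next
    case (Cons l' \<beta>')
    obtain t u where l': "l' = (of_int t, u)" and \<beta>': "integral_word \<beta>'"
      using Cons.prems by (rule integral_word_ConsE)
    define a b where "a = Hw (l # \<alpha>')" and "b = Hw (l' # \<beta>')"
    \<comment> \<open>Discrete product rule: every increment of a b is a sum of products of shorter words.\<close>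
    have step: "a M * b M - a (M - 1) * b (M - 1)
        = s ^ M * of_nat M powi (- r) * (Hw \<alpha>' (M - 1) * b (M - 1))
        + u ^ M * of_nat M powi (- t) * (a (M - 1) * Hw \<beta>' (M - 1))
        + (s * u) ^ M * of_nat M powi (- r - t) * (Hw \<alpha>' (M - 1) * Hw \<beta>' (M - 1))"
      if "0 < M" for M
    proof -
      have da: "a M - a (M - 1) = s ^ M * of_nat M powi (- r) * Hw \<alpha>' (M - 1)"
        using Hw_Cons_of_int_step[OF that, of r s \<alpha>'] by (simp add: a_def l)
      have db: "b M - b (M - 1) = u ^ M * of_nat M powi (- t) * Hw \<beta>' (M - 1)"
        using Hw_Cons_of_int_step[OF that, of t u \<beta>'] by (simp add: b_def l')
      have pw: "(of_nat M :: complex) powi (- r - t) = of_nat M powi (- r) * of_nat M powi (- t)"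
        using that power_int_add[of "of_nat M :: complex" "- r" "- t"] by simp
      have "a M * b M - a (M - 1) * b (M - 1) = (a M - a (M - 1)) * b (M - 1)
          + a (M - 1) * (b M - b (M - 1)) + (a M - a (M - 1)) * (b M - b (M - 1))"
        by (simp add: algebra_simps)
      then show ?thesis
        unfolding da db pw by (simp add: power_mult_distrib mult_ac)
    qed
    have "harmonic_span (\<lambda>N.
        (\<Sum>M=1..N. s ^ M * of_nat M powi (- r) * (Hw \<alpha>' (M - 1) * b (M - 1)))
      + (\<Sum>M=1..N. u ^ M * of_nat M powi (- t) * (a (M - 1) * Hw \<beta>' (M - 1)))
      + (\<Sum>M=1..N. (s * u) ^ M * of_nat M powi (- r - t) * (Hw \<alpha>' (M - 1) * Hw \<beta>' (M - 1))))"
      unfolding a_def b_def using IH_\<alpha>[OF \<alpha>'] Cons.IH[OF \<beta>'] IH_\<alpha>[OF \<alpha>' \<beta>'] Cons.prems \<alpha>' \<beta>'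
      by (intro harmonic_span.add harmonic_span_nested_sum) auto
    also have "(\<lambda>N. (\<Sum>M=1..N. s ^ M * of_nat M powi (- r) * (Hw \<alpha>' (M - 1) * b (M - 1)))
      + (\<Sum>M=1..N. u ^ M * of_nat M powi (- t) * (a (M - 1) * Hw \<beta>' (M - 1)))
      + (\<Sum>M=1..N. (s * u) ^ M * of_nat M powi (- r - t) * (Hw \<alpha>' (M - 1) * Hw \<beta>' (M - 1))))
      = (\<lambda>N. \<Sum>M=1..N. a M * b M - a (M - 1) * b (M - 1))"
      unfolding sum.distrib[symmetric] by (intro ext sum.cong refl step[symmetric]) simp
    finally show ?case
      unfolding a_def b_def by (rule harmonic_span_of_increments)
  qed
qed

lemma harmonic_span_mult_Hw_left:
  "harmonic_span g \<Longrightarrow> integral_word \<alpha> \<Longrightarrow> harmonic_span (\<lambda>N. Hw \<alpha> N * g N)"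
proof (induction g rule: harmonic_span.induct)
  case (word \<beta>)
  then show ?case by (simp add: harmonic_span_mult_Hw)
next
  case (add f g)
  then show ?case by (simp add: distrib_left harmonic_span.add)
next
  case (scale f a)
  then show ?case using harmonic_span.scale[of _ a] by (simp add: mult.left_commute)
qed

lemma harmonic_span_mult:
  "harmonic_span f \<Longrightarrow> harmonic_span g \<Longrightarrow> harmonic_span (\<lambda>N. f N * g N)"
proof (induction f rule: harmonic_span.induct)
  case (word \<alpha>)
  then show ?case by (simp add: harmonic_span_mult_Hw_left)
next
  case (add f f')
  then show ?case by (simp add: distrib_right harmonic_span.add)
next
  case (scale f a)
  then show ?case using harmonic_span.scale[of _ a] by (simp add: mult.assoc)
qed

lemma harmonic_span_power: "harmonic_span f \<Longrightarrow> harmonic_span (\<lambda>N. f N ^ n)"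
  by (induction n) (simp_all add: harmonic_span_const harmonic_span_mult)

lemma harmonic_span_prod:
  "finite A \<Longrightarrow> (\<And>j. j \<in> A \<Longrightarrow> harmonic_span (f j)) \<Longrightarrow> harmonic_span (\<lambda>N. \<Prod>j\<in>A. f j N)"
  by (induction A rule: finite_induct) (simp_all add: harmonic_span_const harmonic_span_mult)

section \<open>Restriction to an arithmetic progression\<close>

lemma sum_root_of_unity_powers:
  fixes c x :: nat
  assumes "0 < c"
  defines "\<omega> \<equiv> exp (2 * of_real pi * \<i> / of_nat c)"
  shows "(\<Sum>j<c. (\<omega> ^ x) ^ j) = (if c dvd x then of_nat c else 0)"
proof -
  have \<omega>_x: "\<omega> ^ x = exp (2 * of_real pi * \<i> * of_nat x / of_nat c)"
    unfolding \<omega>_def by (subst exp_of_nat_mult[symmetric]) (simp add: field_simps)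
  show ?thesis
  proof (cases "c dvd x")
    case True
    then show ?thesis using complex_root_unity_eq_1[of c x] assms(1) \<omega>_x by simp
  next
    case False
    then have "\<omega> ^ x \<noteq> 1" using complex_root_unity_eq_1[of c x] assms(1) \<omega>_x by simp
    moreover have "(\<omega> ^ x) ^ c = 1"
      using complex_root_unity[of c x] assms(1) \<omega>_x by simp
    ultimately show ?thesis using False by (simp add: geometric_sum)
  qed
qed

lemma harmonic_span_filtered_nested_sum:
  assumes "0 < c" and "harmonic_span G"
  shows "harmonic_span (\<lambda>N. \<Sum>M=1..N. of_bool (c dvd M + d) * t ^ M * of_nat M powi a * G (M - 1))"
proof -
  \<comment> \<open>Roots-of-unity filter: the indicator of \<open>c dvd M + d\<close> is an average of characters
    \<open>M \<mapsto> (\<omega> ^ j) ^ M\<close>, and each character only twists \<open>t\<close>.\<close>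
  define \<omega> where "\<omega> = exp (2 * of_real pi * \<i> / of_nat c)"
  define F where "F j N = (\<omega> ^ j) ^ d / of_nat c * (\<Sum>M=1..N. (\<omega> ^ j * t) ^ M * of_nat M powi a * G (M - 1))"
    for j N
  have filter: "of_bool (c dvd M + d) = (\<Sum>j<c. (\<omega> ^ j) ^ d * (\<omega> ^ j) ^ M) / of_nat c" for M
  proof -
    have "(\<omega> ^ (M + d)) ^ j = (\<omega> ^ j) ^ d * (\<omega> ^ j) ^ M" for j
      by (simp flip: power_mult power_add add: algebra_simps)
    then show ?thesis
      using sum_root_of_unity_powers[OF assms(1), of "M + d"] assms(1) by (simp add: \<omega>_def)
  qed
  have "(\<Sum>M=1..N. of_bool (c dvd M + d) * t ^ M * of_nat M powi a * G (M - 1))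
      = (\<Sum>M=1..N. \<Sum>j<c. (\<omega> ^ j) ^ d / of_nat c * ((\<omega> ^ j * t) ^ M * of_nat M powi a * G (M - 1)))"
    for N unfolding filter
    by (simp add: sum_divide_distrib sum_distrib_left sum_distrib_right power_mult_distrib mult_ac)
  also have "\<dots> N = (\<Sum>j<c. F j N)" for N
    unfolding F_def sum_distrib_left by (rule sum.swap)
  finally have "(\<lambda>N. \<Sum>M=1..N. of_bool (c dvd M + d) * t ^ M * of_nat M powi a * G (M - 1))
      = (\<lambda>N. \<Sum>j<c. F j N)"
    by (rule ext)
  moreover have "harmonic_span (\<lambda>N. \<Sum>j<c. F j N)"
    unfolding F_def
    by (intro harmonic_span_sum harmonic_span.scale harmonic_span_nested_sum assms(2)) simp
  ultimately show ?thesis by simp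
qed

lemma harmonic_span_filtered_sum:
  assumes "0 < c" and "harmonic_span G"
  shows "harmonic_span (\<lambda>N. \<Sum>M=1..N. of_bool (c dvd M + d) * t ^ M * of_nat M powi a * G M)"
  using assms(2)
proof (rule harmonic_span_weighted_sum_induct[where K = "\<lambda>M. of_bool (c dvd M + d) * t ^ M * of_nat M powi a"
      and h = "\<lambda>M. M"])
  fix \<beta> assume \<beta>: "integral_word \<beta>"
  show "harmonic_span (\<lambda>N. \<Sum>M=1..N. of_bool (c dvd M + d) * t ^ M * of_nat M powi a * Hw \<beta> M)"
  proof (cases \<beta>)
    case Nil
    then show ?thesis
      using harmonic_span_filtered_nested_sum[OF assms(1) harmonic_span_const[of 1], of d t a] by simp
  next
    case (Cons l \<beta>')
    with \<beta> obtain r s where l: "l = (of_int r, s)" and \<beta>': "integral_word \<beta>'"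
      by (auto elim: integral_word_ConsE)
    have "of_bool (c dvd M + d) * t ^ M * of_nat M powi a * Hw \<beta> M
        = of_bool (c dvd M + d) * t ^ M * of_nat M powi a * Hw \<beta> (M - 1)
        + of_bool (c dvd M + d) * (t * s) ^ M * of_nat M powi (a - r) * Hw \<beta>' (M - 1)"
      if "0 < M" for M
    proof -
      have "(of_nat M :: complex) powi (a - r) = of_nat M powi a * of_nat M powi (- r)"
        using that power_int_add[of "of_nat M :: complex" a "- r"] by simp
      then show ?thesis
        using Hw_Cons_of_int_step[OF that, of r s \<beta>'] unfolding Cons l
        by (simp add: power_mult_distrib algebra_simps)
    qed
    then have "(\<lambda>N. \<Sum>M=1..N. of_bool (c dvd M + d) * t ^ M * of_nat M powi a * Hw \<beta> M)
        = (\<lambda>N. (\<Sum>M=1..N. of_bool (c dvd M + d) * t ^ M * of_nat M powi a * Hw \<beta> (M - 1))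
          + (\<Sum>M=1..N. of_bool (c dvd M + d) * (t * s) ^ M * of_nat M powi (a - r) * Hw \<beta>' (M - 1)))"
      by (intro ext) (simp add: sum.distrib[symmetric])
    moreover have "harmonic_span \<dots>"
      using \<beta> \<beta>' by (intro harmonic_span.add harmonic_span_filtered_nested_sum assms(1) harmonic_span.word)
    ultimately show ?thesis by simp
  qed
qed (fact harmonic_span.add harmonic_span.scale)+

section \<open>Two consecutive levels\<close>

text \<open>The value at \<open>N\<close> of a member of \<open>harmonic_span2\<close> lies in \<open>\<H>_N + \<H>_(N+1)\<close>.\<close>
inductive harmonic_span2 :: "(nat \<Rightarrow> complex) \<Rightarrow> bool" where
  span: "harmonic_span f \<Longrightarrow> harmonic_span2 f"
| shift: "harmonic_span f \<Longrightarrow> harmonic_span2 (\<lambda>N. f (Suc N))"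
| add: "harmonic_span2 f \<Longrightarrow> harmonic_span2 g \<Longrightarrow> harmonic_span2 (\<lambda>N. f N + g N)"
| scale: "harmonic_span2 f \<Longrightarrow> harmonic_span2 (\<lambda>N. a * f N)"

text \<open>Shifting the index turns the weight \<open>(M + 1) powi j\<close> into \<open>M powi j\<close>, at the cost of
  evaluating a nested sum at \<open>N + 1\<close>.\<close>
lemma harmonic_span2_filtered_sum_shift:
  assumes "0 < c" and "harmonic_span G"
  shows "harmonic_span2 (\<lambda>N. \<Sum>M=1..N. of_bool (c dvd M + d) * u ^ M * (of_nat M + 1) powi j * G M)"
proof (cases "u = 0")
  case True
  then have "(\<lambda>N. \<Sum>M=1..N. of_bool (c dvd M + d) * u ^ M * (of_nat M + 1) powi j * G M) = (\<lambda>N. 0)"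
    by (intro ext sum.neutral) auto
  then show ?thesis using harmonic_span2.span[OF harmonic_span_const[of 0]] by simp
next
  case False
  define g where "g M = of_bool (c dvd M + (d + c - 1)) * u ^ M * of_nat M powi j * G (M - 1)" for M
  define F where "F N = (\<Sum>M=1..N. g M)" for N
  have "harmonic_span F"
    unfolding F_def g_def by (rule harmonic_span_filtered_nested_sum[OF assms])
  have "of_bool (c dvd M + d) * u ^ M * (of_nat M + 1) powi j * G M = g (Suc M) / u" for M
  proof -
    have "Suc M + (d + c - 1) = M + d + c" using assms(1) by simp
    then have dvd: "c dvd Suc M + (d + c - 1) \<longleftrightarrow> c dvd M + d"
      by (simp only: dvd_add_triv_right_iff)
    have Suc_M: "of_nat (Suc M) = (of_nat M + 1 :: complex)" by simp
    show ?thesis using False unfolding g_def dvd Suc_M by simp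
  qed
  moreover have "(\<Sum>M=1..N. g (Suc M)) = F (Suc N) - F 1" for N
    unfolding F_def sum.shift_bounds_cl_Suc_ivl[symmetric]
    using sum.atLeast_Suc_atMost[of 1 "Suc N" g] by simp
  ultimately have "(\<Sum>M=1..N. of_bool (c dvd M + d) * u ^ M * (of_nat M + 1) powi j * G M)
      = 1 / u * F (Suc N) + - F 1 / u" for N
    by (simp add: sum_divide_distrib[symmetric] diff_divide_distrib)
  moreover have "harmonic_span2 (\<lambda>N. 1 / u * F (Suc N) + - F 1 / u)"
    by (intro harmonic_span2.add harmonic_span2.scale harmonic_span2.shift harmonic_span2.span
        harmonic_span_const \<open>harmonic_span F\<close>)
  ultimately show ?thesis by simp
qed

section \<open>Partial fractions\<close>

inductive partial_fraction :: "(complex \<Rightarrow> complex) \<Rightarrow> bool" where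
  x_powi: "partial_fraction (\<lambda>x. x powi i)"
| x_plus_1_powi: "partial_fraction (\<lambda>x. (x + 1) powi i)"
| add: "partial_fraction f \<Longrightarrow> partial_fraction g \<Longrightarrow> partial_fraction (\<lambda>x. f x + g x)"
| scale: "partial_fraction f \<Longrightarrow> partial_fraction (\<lambda>x. a * f x)"
| cong: "partial_fraction g \<Longrightarrow> (\<And>x. x \<noteq> 0 \<Longrightarrow> x + 1 \<noteq> 0 \<Longrightarrow> f x = g x) \<Longrightarrow> partial_fraction f"

lemma partial_fraction_diff:
  "partial_fraction f \<Longrightarrow> partial_fraction g \<Longrightarrow> partial_fraction (\<lambda>x. f x - g x)"
  using partial_fraction.add[OF _ partial_fraction.scale[of g "-1"]] by simp

lemma partial_fraction_nat_powi_left: "partial_fraction (\<lambda>x. x powi int n * (x + 1) powi b)"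
proof (induction n arbitrary: b)
  case 0
  then show ?case by (simp add: partial_fraction.x_plus_1_powi)
next
  case (Suc n)
  show ?case
  proof (rule partial_fraction.cong[OF partial_fraction_diff[OF Suc[of "b + 1"] Suc[of b]]])
    fix x :: complex assume "x \<noteq> 0" "x + 1 \<noteq> 0"
    then have "(x + 1) powi (b + 1) = (x + 1) powi b * (x + 1)" by (simp add: power_int_add_1)
    moreover have "x powi int (Suc n) = x powi int n * x"
      by (simp only: power_int_of_nat power_Suc2)
    ultimately show "x powi int (Suc n) * (x + 1) powi b
        = x powi int n * (x + 1) powi (b + 1) - x powi int n * (x + 1) powi b"
      by (simp only:) (simp add: algebra_simps)
  qed
qed

lemma partial_fraction_nat_powi_right: "partial_fraction (\<lambda>x. x powi a * (x + 1) powi int n)"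
proof (induction n arbitrary: a)
  case 0
  then show ?case by (simp add: partial_fraction.x_powi)
next
  case (Suc n)
  show ?case
  proof (rule partial_fraction.cong[OF partial_fraction.add[OF Suc[of "a + 1"] Suc[of a]]])
    fix x :: complex assume "x \<noteq> 0" "x + 1 \<noteq> 0"
    then have "x powi (a + 1) = x powi a * x" by (simp add: power_int_add_1)
    moreover have "(x + 1) powi int (Suc n) = (x + 1) powi int n * (x + 1)"
      by (simp only: power_int_of_nat power_Suc2)
    ultimately show "x powi a * (x + 1) powi int (Suc n)
        = x powi (a + 1) * (x + 1) powi int n + x powi a * (x + 1) powi int n"
      by (simp only:) (simp add: algebra_simps)
  qed
qed

lemma partial_fraction_powi_mult: "partial_fraction (\<lambda>x. x powi a * (x + 1) powi b)"
proof (induction "nat (- a) + nat (- b)" arbitrary: a b rule: less_induct)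
  case less
  consider "0 \<le> a" | "0 \<le> b" | "a < 0" "b < 0" by linarith
  then show ?case
  proof cases
    case 1
    then show ?thesis using partial_fraction_nat_powi_left[of "nat a" b] by simp
  next
    case 2
    then show ?thesis using partial_fraction_nat_powi_right[of a "nat b"] by simp
  next
    case 3
    \<comment> \<open>From 1 = (x + 1) - x.\<close>
    have "partial_fraction (\<lambda>x. x powi a * (x + 1) powi (b + 1) - x powi (a + 1) * (x + 1) powi b)"
      using 3 by (intro partial_fraction_diff less) auto
    then show ?thesis
    proof (rule partial_fraction.cong)
      fix x :: complex assume "x \<noteq> 0" "x + 1 \<noteq> 0"
      then have "x powi (a + 1) = x powi a * x" "(x + 1) powi (b + 1) = (x + 1) powi b * (x + 1)"
        by (simp_all add: power_int_add_1)
      then show "x powi a * (x + 1) powi b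
          = x powi a * (x + 1) powi (b + 1) - x powi (a + 1) * (x + 1) powi b"
        by (simp add: algebra_simps)
    qed
  qed
qed

lemma harmonic_span2_filtered_partial_fraction_sum:
  assumes "0 < c" and "harmonic_span G" and "partial_fraction f"
  shows "harmonic_span2 (\<lambda>N. \<Sum>M=1..N. of_bool (c dvd M + d) * u ^ M * f (of_nat M) * G M)"
  using assms(3)
proof (induction f rule: partial_fraction.induct)
  case (x_powi i)
  show ?case
    by (rule harmonic_span2.span[OF harmonic_span_filtered_sum[OF assms(1,2)]])
next
  case (x_plus_1_powi i)
  show ?case
    by (rule harmonic_span2_filtered_sum_shift[OF assms(1,2)])
next
  case (add f g)
  then show ?case
    by (simp add: distrib_left distrib_right sum.distrib harmonic_span2.add)
next
  case (scale f a)
  then show ?case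
    using harmonic_span2.scale[OF scale.IH, of a] by (simp add: sum_distrib_left mult_ac)
next
  case (cong g f)
  have "(\<lambda>N. \<Sum>M=1..N. of_bool (c dvd M + d) * u ^ M * f (of_nat M) * G M)
      = (\<lambda>N. \<Sum>M=1..N. of_bool (c dvd M + d) * u ^ M * g (of_nat M) * G M)"
  proof (intro ext sum.cong refl)
    fix M N :: nat assume "M \<in> {1..N}"
    then have "(of_nat M :: complex) \<noteq> 0" and "(of_nat M :: complex) + 1 \<noteq> 0"
      using of_nat_neq_0[of M] by (auto simp: add.commute)
    then show "of_bool (c dvd M + d) * u ^ M * f (of_nat M) * G M
        = of_bool (c dvd M + d) * u ^ M * g (of_nat M) * G M"
      by (simp add: cong.hyps(2))
  qed
  then show ?case using cong.IH by simp
qed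

text \<open>Via \<open>Hw \<beta> (M + 1) = Hw \<beta> M + s ^ (M + 1) * (M + 1) powi (- r) * Hw \<beta>' M\<close>, where the
  factor \<open>M powi q * (M + 1) powi (- r)\<close> is split into partial fractions.\<close>
lemma harmonic_span2_filtered_sum_Suc:
  assumes "0 < c" and "harmonic_span G"
  shows "harmonic_span2 (\<lambda>N. \<Sum>M=1..N. of_bool (c dvd M + d) * t ^ M * of_nat M powi q * G (M + 1))"
  using assms(2)
proof (rule harmonic_span_weighted_sum_induct[where K = "\<lambda>M. of_bool (c dvd M + d) * t ^ M * of_nat M powi q"
      and h = "\<lambda>M. M + 1"])
  fix \<beta> assume \<beta>: "integral_word \<beta>"
  show "harmonic_span2 (\<lambda>N. \<Sum>M=1..N. of_bool (c dvd M + d) * t ^ M * of_nat M powi q * Hw \<beta> (M + 1))"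
  proof (cases \<beta>)
    case Nil
    then show ?thesis
      using harmonic_span2.span[OF harmonic_span_filtered_sum[OF assms(1) harmonic_span_const[of 1]]]
      by simp
  next
    case (Cons l \<beta>')
    with \<beta> obtain r s where l: "l = (of_int r, s)" and \<beta>': "integral_word \<beta>'"
      by (auto elim: integral_word_ConsE)
    define f where "f x = x powi q * (x + 1) powi (- r)" for x :: complex
    have "of_bool (c dvd M + d) * t ^ M * of_nat M powi q * Hw \<beta> (M + 1)
        = of_bool (c dvd M + d) * t ^ M * of_nat M powi q * Hw \<beta> M
        + s * (of_bool (c dvd M + d) * (t * s) ^ M * f (of_nat M) * Hw \<beta>' M)" for M
      using Hw_Cons_of_int_step[of "M + 1" r s \<beta>'] unfolding Cons l f_def
      by (simp add: power_mult_distrib algebra_simps)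
    then have "(\<lambda>N. \<Sum>M=1..N. of_bool (c dvd M + d) * t ^ M * of_nat M powi q * Hw \<beta> (M + 1))
        = (\<lambda>N. (\<Sum>M=1..N. of_bool (c dvd M + d) * t ^ M * of_nat M powi q * Hw \<beta> M)
          + s * (\<Sum>M=1..N. of_bool (c dvd M + d) * (t * s) ^ M * f (of_nat M) * Hw \<beta>' M))"
      by (simp add: sum.distrib sum_distrib_left)
    moreover have "harmonic_span2 \<dots>"
      using \<beta> \<beta>' unfolding f_def
      by (intro harmonic_span2.add harmonic_span2.scale harmonic_span2.span harmonic_span_filtered_sum
          harmonic_span2_filtered_partial_fraction_sum partial_fraction_powi_mult assms(1)
          harmonic_span.word)
    ultimately show ?thesis by simp
  qed
qed (fact harmonic_span2.add harmonic_span2.scale)+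

section \<open>Reindexing and the main theorem\<close>

lemma harmonic_span_sum_list:
  "harmonic_span f \<Longrightarrow> \<exists>P. \<forall>N. f N = (\<Sum>(a, \<beta>)\<leftarrow>P. a * Hw \<beta> N)"
proof (induction rule: harmonic_span.induct)
  case (word \<beta>)
  show ?case by (rule exI[of _ "[(1, \<beta>)]"]) simp
next
  case (add f g)
  then obtain P Q where "\<forall>N. f N = (\<Sum>(a, \<beta>)\<leftarrow>P. a * Hw \<beta> N)" "\<forall>N. g N = (\<Sum>(a, \<beta>)\<leftarrow>Q. a * Hw \<beta> N)"
    by blast
  then show ?case by (intro exI[of _ "P @ Q"]) simp
next
  case (scale f b)
  then obtain P where "\<forall>N. f N = (\<Sum>(a, \<beta>)\<leftarrow>P. a * Hw \<beta> N)" by blast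
  then show ?case
    by (intro exI[of _ "map (\<lambda>(a, \<beta>). (b * a, \<beta>)) P"])
      (simp add: sum_list_const_mult[symmetric] o_def case_prod_beta mult.assoc)
qed

lemma harmonic_span2_sum_list:
  "harmonic_span2 f \<Longrightarrow>
    \<exists>P Q. \<forall>N. f N = (\<Sum>(a, \<beta>)\<leftarrow>P. a * Hw \<beta> N) + (\<Sum>(a, \<beta>)\<leftarrow>Q. a * Hw \<beta> (Suc N))"
proof (induction rule: harmonic_span2.induct)
  case (span f)
  then obtain P where "\<forall>N. f N = (\<Sum>(a, \<beta>)\<leftarrow>P. a * Hw \<beta> N)" by (blast dest: harmonic_span_sum_list)
  then show ?case by (intro exI[of _ P] exI[of _ "[]"]) simp
next
  case (shift f)
  then obtain Q where "\<forall>N. f N = (\<Sum>(a, \<beta>)\<leftarrow>Q. a * Hw \<beta> N)" by (blast dest: harmonic_span_sum_list)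
  then show ?case by (intro exI[of _ "[]"] exI[of _ Q]) simp
next
  case (add f g)
  then obtain P Q P' Q' where
      "\<forall>N. f N = (\<Sum>(a, \<beta>)\<leftarrow>P. a * Hw \<beta> N) + (\<Sum>(a, \<beta>)\<leftarrow>Q. a * Hw \<beta> (Suc N))"
      "\<forall>N. g N = (\<Sum>(a, \<beta>)\<leftarrow>P'. a * Hw \<beta> N) + (\<Sum>(a, \<beta>)\<leftarrow>Q'. a * Hw \<beta> (Suc N))"
    by blast
  then show ?case by (intro exI[of _ "P @ P'"] exI[of _ "Q @ Q'"]) simp
next
  case (scale f b)
  then obtain P Q where
      "\<forall>N. f N = (\<Sum>(a, \<beta>)\<leftarrow>P. a * Hw \<beta> N) + (\<Sum>(a, \<beta>)\<leftarrow>Q. a * Hw \<beta> (Suc N))"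
    by blast
  then show ?case
    by (intro exI[of _ "map (\<lambda>(a, \<beta>). (b * a, \<beta>)) P"] exI[of _ "map (\<lambda>(a, \<beta>). (b * a, \<beta>)) Q"])
      (simp add: sum_list_const_mult[symmetric] o_def case_prod_beta mult.assoc distrib_left)
qed

lemma in_HH_sum_if_harmonic_span2:
  assumes "harmonic_span2 G"
    and "\<And>k. 1 \<le> k \<Longrightarrow> F k = G (N1 k)" and "\<And>k. 1 \<le> k \<Longrightarrow> N2 k = Suc (N1 k)"
  shows "in_HH_sum F N1 N2"
proof -
  obtain P Q where "\<forall>N. G N = (\<Sum>(a, \<beta>)\<leftarrow>P. a * Hw \<beta> N) + (\<Sum>(a, \<beta>)\<leftarrow>Q. a * Hw \<beta> (Suc N))"
    using harmonic_span2_sum_list[OF assms(1)] by blast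
  then show ?thesis
    unfolding in_HH_sum_def using assms(2,3) by (intro exI[of _ P] exI[of _ Q]) simp
qed

lemma sum_of_bool_dvd_reindex:
  fixes g :: "nat \<Rightarrow> 'a::semiring_1"
  assumes "0 < c"
  shows "(\<Sum>M=1..c * k - d. of_bool (c dvd M + d) * g M) = (\<Sum>n | n \<le> k \<and> d < c * n. g (c * n - d))"
proof -
  have inj: "inj_on (\<lambda>n. c * n - d) {n. n \<le> k \<and> d < c * n}"
  proof (rule inj_onI)
    fix x y assume "x \<in> {n. n \<le> k \<and> d < c * n}" "y \<in> {n. n \<le> k \<and> d < c * n}"
      and eq: "c * x - d = c * y - d"
    then have "d < c * x" "d < c * y" by auto
    with eq have "c * x = c * y" by arith
    then show "x = y" using assms by simp
  qed
  have "{1..c * k - d} \<inter> {M. c dvd M + d} = (\<lambda>n. c * n - d) ` {n. n \<le> k \<and> d < c * n}"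
  proof (intro equalityI subsetI)
    fix M assume "M \<in> {1..c * k - d} \<inter> {M. c dvd M + d}"
    then obtain n where "M + d = c * n" "1 \<le> M" "M \<le> c * k - d" by (auto elim!: dvdE)
    moreover from this have "c * n \<le> c * k" by arith
    then have "n \<le> k" using assms by simp
    ultimately show "M \<in> (\<lambda>n. c * n - d) ` {n. n \<le> k \<and> d < c * n}"
      by (intro image_eqI[of _ _ n]) auto
  next
    fix M assume "M \<in> (\<lambda>n. c * n - d) ` {n. n \<le> k \<and> d < c * n}"
    then obtain n where "M = c * n - d" "n \<le> k" "d < c * n" by auto
    moreover from this have "c * n \<le> c * k" by simp
    ultimately show "M \<in> {1..c * k - d} \<inter> {M. c dvd M + d}" by (auto intro: diff_le_mono)
  qed
  then show ?thesis by (simp add: sum.reindex[OF inj])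
qed

lemma sum_multiples_reindex:
  fixes f :: "nat \<Rightarrow> 'a::semiring_1"
  assumes "0 < c"
  shows "(\<Sum>n=1..k. f (c * n)) = (\<Sum>M=1..c * k. of_bool (c dvd M) * f M)"
proof -
  have "{n. n \<le> k \<and> 0 < c * n} = {1..k}" using assms by auto
  then show ?thesis using sum_of_bool_dvd_reindex[OF assms, where k = k and d = 0 and g = f] by simp
qed

text \<open>The lower bound \<open>nu c\<close> excludes exactly the index \<open>n = 1\<close> when \<open>c = 1\<close>, for which \<open>c * n - 1 = 0\<close>.\<close>
lemma sum_multiples_pred_reindex:
  fixes f :: "nat \<Rightarrow> 'a::semiring_1"
  assumes "0 < c"
  shows "(\<Sum>n=nu c..k. f (c * n - 1)) = (\<Sum>M=1..c * k - 1. of_bool (c dvd M + 1) * f M)"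
proof -
  have nu: "1 < c * n \<longleftrightarrow> nu c \<le> n" for n
  proof (cases "c = 1")
    case False
    with assms have "2 \<le> c" by simp
    then show ?thesis by (cases n) (auto simp: nu_def)
  qed (auto simp: nu_def)
  have "{n. n \<le> k \<and> 1 < c * n} = {nu c..k}" unfolding nu by auto
  then show ?thesis by (simp only: sum_of_bool_dvd_reindex[OF assms])
qed

theorem theorem3p5:
  fixes c m :: nat and \<alpha> :: "nat \<Rightarrow> word" and e :: "nat \<Rightarrow> nat"
    and q :: int and z :: complex
  assumes "c > 0"
    and "\<forall>j\<in>{1..m}. \<forall>l\<in>set (\<alpha> j). fst l \<in> \<int>"
  shows "in_HH_sum
           (\<lambda>k. \<Sum>n=1..k. z ^ n * (of_nat (c*n)) powi q * (\<Prod>j=1..m. Hw (\<alpha> j) (c*n+1) ^ e j))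
           (\<lambda>k. c*k) (\<lambda>k. c*k+1)
       \<and> in_HH_sum
           (\<lambda>k. \<Sum>n=nu c..k. z ^ n * (of_nat (c*n) - 1) powi q * (\<Prod>j=1..m. Hw (\<alpha> j) (c*n) ^ e j))
           (\<lambda>k. c*k - 1) (\<lambda>k. c*k)"
proof -
  obtain w where z: "z = w ^ c" using exists_complex_root[of c z] assms(1) by auto
  define Pi where "Pi N = (\<Prod>j=1..m. Hw (\<alpha> j) N ^ e j)" for N
  define g where "g M = w ^ M * of_nat M powi q * Pi (M + 1)" for M
  have "harmonic_span Pi"
    unfolding Pi_def using assms(2)
    by (intro harmonic_span_prod harmonic_span_power harmonic_span.word) (auto simp: integral_word_def)
  then have S: "harmonic_span2 (\<lambda>N. \<Sum>M=1..N. of_bool (c dvd M + d) * g M)" for d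
    unfolding g_def using harmonic_span2_filtered_sum_Suc[OF assms(1)] by (simp add: mult.assoc)
  have first: "(\<Sum>n=1..k. z ^ n * (of_nat (c*n)) powi q * (\<Prod>j=1..m. Hw (\<alpha> j) (c*n+1) ^ e j))
      = (\<Sum>M=1..c * k. of_bool (c dvd M + 0) * g M)" for k
    using sum_multiples_reindex[OF assms(1), of g k] by (simp add: z g_def Pi_def power_mult)
  have shifted_term: "z ^ n * (of_nat (c*n) - 1) powi q * (\<Prod>j=1..m. Hw (\<alpha> j) (c*n) ^ e j) = w * g (c * n - 1)"
    if "n \<in> {nu c..k}" for n k
  proof -
    from that assms(1) obtain M where M: "c * n = Suc M"
      by (cases "c * n") (auto simp: nu_def split: if_splits)
    then show ?thesis by (simp add: z g_def Pi_def mult_ac flip: power_mult)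
  qed
  have second: "(\<Sum>n=nu c..k. z ^ n * (of_nat (c*n) - 1) powi q * (\<Prod>j=1..m. Hw (\<alpha> j) (c*n) ^ e j))
      = w * (\<Sum>M=1..c * k - 1. of_bool (c dvd M + 1) * g M)" for k
    unfolding sum_multiples_pred_reindex[OF assms(1), symmetric] sum_distrib_left
    by (intro sum.cong refl shifted_term)
  show ?thesis
    unfolding first second
    by (rule conjI[OF in_HH_sum_if_harmonic_span2[OF S[of 0]]
          in_HH_sum_if_harmonic_span2[OF harmonic_span2.scale[OF S[of 1], where a = w]]])
      (use assms(1) in simp_all)
qed

end
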